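(* With the system $T = D_T\cup A\cup B$ defined below, both $T\setminus B = D_T\cup A$ and $T\setminus D_T = A\cup B$ are terminating.
   Context: A string rewriting system (SRS) $R$ over an alphabet $\Sigma$ is a set of pairs $\ell\to r$ of strings; it induces the rewrite relation $u\ell v\to_R urv$ ($u,v\in\Sigma^*$). $R$ is terminating if there is no infinite sequence $s_0\to_R s_1\to_R\cdots$. Alphabet: $\{0_2,1_2,0_3,1_3,2_3,\lhd,\rhd\}$ (formal symbols). $D_T=\{0_2\rhd\to\rhd,\ 1_2\rhd\to 2_3\rhd\}$; $A=\{0_20_3\to0_30_2,\ 0_21_3\to0_31_2,\ 0_22_3\to1_30_2,\ 1_20_3\to1_31_2,\ 1_21_3\to2_30_2,\ 1_22_3\to2_31_2\}$; $B=\{\lhd0_3\to\lhd1_2,\ \lhd1_3\to\lhd0_20_2,\ \lhd2_3\to\lhd0_21_2\}$; $T=D_T\cup A\cup B$. *)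

theory Defs
  imports Main
begin

datatype sym = Z2 | O2 | Z3 | O3 | T3 | Lhd | Rhd

type_synonym srs = "(sym list \<times> sym list) set"

definition rstep :: "srs \<Rightarrow> (sym list \<times> sym list) set" where
  "rstep R = {(u @ l @ v, u @ r @ v) | u l r v. (l, r) \<in> R}"

definition terminating :: "srs \<Rightarrow> bool" where
  "terminating R \<longleftrightarrow> \<not> (\<exists>s :: nat \<Rightarrow> sym list. \<forall>i. (s i, s (Suc i)) \<in> rstep R)"

definition D_T :: srs where
  "D_T = {([Z2, Rhd], [Rhd]), ([O2, Rhd], [T3, Rhd])}"

definition A_rules :: srs where
  "A_rules = {([Z2, Z3], [Z3, Z2]), ([Z2, O3], [Z3, O2]), ([Z2, T3], [O3, Z2]),
              ([O2, Z3], [O3, O2]), ([O2, O3], [T3, Z2]), ([O2, T3], [T3, O2])}"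

definition B_rules :: srs where
  "B_rules = {([Lhd, Z3], [Lhd, O2]), ([Lhd, O3], [Lhd, Z2, Z2]), ([Lhd, T3], [Lhd, Z2, O2])}"

definition T_sys :: srs where
  "T_sys = D_T \<union> A_rules \<union> B_rules"

end

theory Submission
  imports Defs
begin

text \<open>Order strings lexicographically by the pair (number of digits of one kind, number of
  inversions), an inversion being a binary digit to the left of a ternary digit. Every rule of
  \<open>A\<close> moves a binary digit past a ternary one, keeping both digit counts and removing an
  inversion. The rules of \<open>D_T\<close> consume a binary digit and those of \<open>B\<close> a ternary digit, so
  \<open>D_T \<union> A\<close> decreases the pair built on the binary count and \<open>A \<union> B\<close> the pair built on the
  ternary count.\<close>

definition binary_digit :: "sym \<Rightarrow> bool" where
  "binary_digit x \<longleftrightarrow> x = Z2 \<or> x = O2"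

definition ternary_digit :: "sym \<Rightarrow> bool" where
  "ternary_digit x \<longleftrightarrow> x = Z3 \<or> x = O3 \<or> x = T3"

definition binary_count :: "sym list \<Rightarrow> nat" where
  "binary_count w = length (filter binary_digit w)"

definition ternary_count :: "sym list \<Rightarrow> nat" where
  "ternary_count w = length (filter ternary_digit w)"

lemma binary_count_append [simp]: "binary_count (u @ v) = binary_count u + binary_count v"
  by (simp add: binary_count_def)

lemma ternary_count_append [simp]: "ternary_count (u @ v) = ternary_count u + ternary_count v"
  by (simp add: ternary_count_def)

fun inversions :: "sym list \<Rightarrow> nat" where
  "inversions [] = 0"
| "inversions (x # xs) = (if binary_digit x then ternary_count xs else 0) + inversions xs"

lemma inversions_append:
  "inversions (u @ v) = inversions u + inversions v + binary_count u * ternary_count v"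
  by (induction u) (auto simp: binary_count_def)

lemma inversions_context_less:
  assumes "binary_count r = binary_count l" "ternary_count r = ternary_count l"
    and "inversions r < inversions l"
  shows "inversions (u @ r @ v) < inversions (u @ l @ v)"
  using assms by (simp add: inversions_append algebra_simps)

definition count_inversions_order :: "(sym list \<Rightarrow> nat) \<Rightarrow> (sym list \<times> sym list) set" where
  "count_inversions_order f = inv_image (less_than <*lex*> less_than) (\<lambda>w. (f w, inversions w))"

lemma wf_count_inversions_order: "wf (count_inversions_order f)"
  by (simp add: count_inversions_order_def wf_lex_prod)

definition inversion_rule :: "sym list \<times> sym list \<Rightarrow> bool" where
  "inversion_rule = (\<lambda>(l, r). binary_count r = binary_count l \<and>
     ternary_count r = ternary_count l \<and> inversions r < inversions l)"

lemma rstep_count_inversions_order: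
  assumes f_append: "\<And>u v. f (u @ v) = f u + f v"
    and rules: "\<And>l r. (l, r) \<in> R \<Longrightarrow> f r < f l \<or> f r = f l \<and> inversion_rule (l, r)"
    and step: "(x, y) \<in> rstep R"
  shows "(y, x) \<in> count_inversions_order f"
proof -
  obtain u l r v where x: "x = u @ l @ v" and y: "y = u @ r @ v" and lr: "(l, r) \<in> R"
    using step by (auto simp: rstep_def)
  from rules[OF lr] show ?thesis
    unfolding x y count_inversions_order_def inversion_rule_def
    by (auto simp: f_append inversions_context_less)
qed

lemma terminating_if_rstep_in_wf:
  assumes "wf W" and "\<And>x y. (x, y) \<in> rstep R \<Longrightarrow> (y, x) \<in> W"
  shows "terminating R"
  unfolding terminating_def
proof
  assume "\<exists>s :: nat \<Rightarrow> sym list. \<forall>i. (s i, s (Suc i)) \<in> rstep R"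
  then obtain s :: "nat \<Rightarrow> sym list" where "\<forall>i. (s (Suc i), s i) \<in> W"
    using assms(2) by blast
  with \<open>wf W\<close> show False
    by (auto simp: wf_iff_no_infinite_down_chain)
qed

lemma inversion_rule_A_rules: "(l, r) \<in> A_rules \<Longrightarrow> inversion_rule (l, r)"
  by (auto simp: A_rules_def inversion_rule_def binary_count_def ternary_count_def
      binary_digit_def ternary_digit_def)

lemma binary_count_decreases_D_T: "(l, r) \<in> D_T \<Longrightarrow> binary_count r < binary_count l"
  by (auto simp: D_T_def binary_count_def binary_digit_def)

lemma ternary_count_decreases_B_rules: "(l, r) \<in> B_rules \<Longrightarrow> ternary_count r < ternary_count l"
  by (auto simp: B_rules_def ternary_count_def ternary_digit_def)

theorem mainTheorem4:
  shows "terminating (T_sys - B_rules) \<and> terminating (T_sys - D_T)"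
proof
  have "binary_count r < binary_count l \<or> binary_count r = binary_count l \<and> inversion_rule (l, r)"
    if "(l, r) \<in> T_sys - B_rules" for l r
    using that binary_count_decreases_D_T inversion_rule_A_rules
    by (auto simp: T_sys_def inversion_rule_def)
  then show "terminating (T_sys - B_rules)"
    by (intro terminating_if_rstep_in_wf[OF wf_count_inversions_order[of binary_count]]
        rstep_count_inversions_order) auto
  have "ternary_count r < ternary_count l \<or> ternary_count r = ternary_count l \<and> inversion_rule (l, r)"
    if "(l, r) \<in> T_sys - D_T" for l r
    using that ternary_count_decreases_B_rules inversion_rule_A_rules
    by (auto simp: T_sys_def inversion_rule_def)
  then show "terminating (T_sys - D_T)"
    by (intro terminating_if_rstep_in_wf[OF wf_count_inversions_order[of ternary_count]]
        rstep_count_inversions_order) auto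
qed

end
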